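(* For a category $\mathbf C$ the following are equivalent: (1) $\mathbf C$ is $C$-discrete; (2) there is a final functor $S\to\mathbf C$ from a large discrete category $S$; (3) there is a large set $S$ of objects of $\mathbf C$ such that every object $c$ of $\mathbf C$ admits exactly one morphism from $c$ whose codomain lies in $S$. Moreover, when these hold, the large set $S$ in (2) or (3) is in bijection with the set of objects of a skeleton of $\mathrm{Max}(\mathbf C)$.
   Context: An object $m$ of a category $\mathbf C$ is maximal if every pair of parallel morphisms $f,g:m\to c$ (not necessarily distinct) has a common retraction, i.e. there is $h:c\to m$ with $f;h=\mathrm{id}_m=g;h$. $\mathrm{Max}(\mathbf C)$ denotes the full subcategory of maximal objects. $\mathbf C$ is $C$-discrete if the isomorphism classes of objects of $\mathrm{Max}(\mathbf C)$ form a large set (a set in the second universe of a fixed chain of Grothendieck universes) and the inclusion functor $\mathrm{Max}(\mathbf C)\hookrightarrow\mathbf C$ is final. A functor $\Phi:\mathbf D\to\mathbf C$ is final if for every object $c$ of $\mathbf C$ the comma category $c/\Phi$ is nonempty and connected. *)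

theory Defs
  imports Main
begin

text \<open>A (small-or-large) category presented by its objects, arrows, domain/codomain,
  identities and composition in diagrammatic order: Comp f g = f;g (first f, then g).\<close>
record ('o, 'a) cat =
  Ob   :: "'o set"
  Ar   :: "'a set"
  Dom  :: "'a \<Rightarrow> 'o"
  Cod  :: "'a \<Rightarrow> 'o"
  Idm  :: "'o \<Rightarrow> 'a"
  Comp :: "'a \<Rightarrow> 'a \<Rightarrow> 'a"

definition hom :: "('o, 'a) cat \<Rightarrow> 'o \<Rightarrow> 'o \<Rightarrow> 'a set" where
  "hom C x y = {f \<in> Ar C. Dom C f = x \<and> Cod C f = y}"

definition category :: "('o, 'a) cat \<Rightarrow> bool" where
  "category C \<longleftrightarrow>
     (\<forall>f\<in>Ar C. Dom C f \<in> Ob C \<and> Cod C f \<in> Ob C) \<and>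
     (\<forall>x\<in>Ob C. Idm C x \<in> hom C x x) \<and>
     (\<forall>f\<in>Ar C. \<forall>g\<in>Ar C. Cod C f = Dom C g \<longrightarrow> Comp C f g \<in> hom C (Dom C f) (Cod C g)) \<and>
     (\<forall>f\<in>Ar C. Comp C (Idm C (Dom C f)) f = f \<and> Comp C f (Idm C (Cod C f)) = f) \<and>
     (\<forall>f\<in>Ar C. \<forall>g\<in>Ar C. \<forall>h\<in>Ar C. Cod C f = Dom C g \<and> Cod C g = Dom C h \<longrightarrow>
         Comp C (Comp C f g) h = Comp C f (Comp C g h))"

definition is_functor :: "('p, 'b) cat \<Rightarrow> ('o, 'a) cat \<Rightarrow> ('p \<Rightarrow> 'o) \<Rightarrow> ('b \<Rightarrow> 'a) \<Rightarrow> bool" where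
  "is_functor D C Fo Fa \<longleftrightarrow>
     category D \<and> category C \<and>
     (\<forall>x\<in>Ob D. Fo x \<in> Ob C) \<and>
     (\<forall>u\<in>Ar D. Fa u \<in> hom C (Fo (Dom D u)) (Fo (Cod D u))) \<and>
     (\<forall>x\<in>Ob D. Fa (Idm D x) = Idm C (Fo x)) \<and>
     (\<forall>u\<in>Ar D. \<forall>v\<in>Ar D. Cod D u = Dom D v \<longrightarrow> Fa (Comp D u v) = Comp C (Fa u) (Fa v))"

definition comma_ob :: "('p, 'b) cat \<Rightarrow> ('o, 'a) cat \<Rightarrow> ('p \<Rightarrow> 'o) \<Rightarrow> 'o \<Rightarrow> ('p \<times> 'a) set" where
  "comma_ob D C Fo c = {(d, f). d \<in> Ob D \<and> f \<in> hom C c (Fo d)}"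

definition comma_rel :: "('p, 'b) cat \<Rightarrow> ('o, 'a) cat \<Rightarrow> ('p \<Rightarrow> 'o) \<Rightarrow> ('b \<Rightarrow> 'a) \<Rightarrow> 'o
    \<Rightarrow> (('p \<times> 'a) \<times> ('p \<times> 'a)) set" where
  "comma_rel D C Fo Fa c =
     {((d, f), (d', f')). (d, f) \<in> comma_ob D C Fo c \<and> (d', f') \<in> comma_ob D C Fo c \<and>
        (\<exists>u\<in>hom D d d'. Comp C f (Fa u) = f')}"

text \<open>Final is_functor: every comma category c/\<Phi> is nonempty and connected (any two objects
  are linked by a finite zig-zag of morphisms).\<close>
definition final :: "('p, 'b) cat \<Rightarrow> ('o, 'a) cat \<Rightarrow> ('p \<Rightarrow> 'o) \<Rightarrow> ('b \<Rightarrow> 'a) \<Rightarrow> bool" where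
  "final D C Fo Fa \<longleftrightarrow> is_functor D C Fo Fa \<and>
     (\<forall>c\<in>Ob C. comma_ob D C Fo c \<noteq> {} \<and>
        (\<forall>x\<in>comma_ob D C Fo c. \<forall>y\<in>comma_ob D C Fo c.
           (x, y) \<in> (comma_rel D C Fo Fa c \<union> (comma_rel D C Fo Fa c)\<inverse>)\<^sup>*))"

definition maximal :: "('o, 'a) cat \<Rightarrow> 'o \<Rightarrow> bool" where
  "maximal C m \<longleftrightarrow> m \<in> Ob C \<and>
     (\<forall>c f g. f \<in> hom C m c \<and> g \<in> hom C m c \<longrightarrow>
        (\<exists>h\<in>hom C c m. Comp C f h = Idm C m \<and> Comp C g h = Idm C m))"

definition MaxCat :: "('o, 'a) cat \<Rightarrow> ('o, 'a) cat" where
  "MaxCat C = \<lparr> Ob = {m. maximal C m},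
                Ar = {f \<in> Ar C. maximal C (Dom C f) \<and> maximal C (Cod C f)},
                Dom = Dom C, Cod = Cod C, Idm = Idm C, Comp = Comp C \<rparr>"

definition isomorphic :: "('o, 'a) cat \<Rightarrow> 'o \<Rightarrow> 'o \<Rightarrow> bool" where
  "isomorphic C x y \<longleftrightarrow> (\<exists>f\<in>hom C x y. \<exists>g\<in>hom C y x.
      Comp C f g = Idm C x \<and> Comp C g f = Idm C y)"

definition iso_classes :: "('o, 'a) cat \<Rightarrow> 'o set set" where
  "iso_classes C = {{y \<in> Ob C. isomorphic C x y} | x. x \<in> Ob C}"

definition skeleton_obs :: "('o, 'a) cat \<Rightarrow> 'o set \<Rightarrow> bool" where
  "skeleton_obs C R \<longleftrightarrow> R \<subseteq> Ob C \<and>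
     (\<forall>x\<in>Ob C. \<exists>r\<in>R. isomorphic C x r) \<and>
     (\<forall>r\<in>R. \<forall>r'\<in>R. isomorphic C r r' \<longrightarrow> r = r')"

text \<open>"Large set": a set of size at most that of the fixed second universe, modelled by a
  fixed parameter set U (injectability into U).\<close>
definition large :: "'u set \<Rightarrow> 'x set \<Rightarrow> bool" where
  "large U X \<longleftrightarrow> (\<exists>f. inj_on f X \<and> f ` X \<subseteq> U)"

definition C_discrete :: "'u set \<Rightarrow> ('o, 'a) cat \<Rightarrow> bool" where
  "C_discrete U C \<longleftrightarrow> large U (iso_classes (MaxCat C)) \<and> final (MaxCat C) C id id"

definition discrete_cat :: "'s set \<Rightarrow> ('s, 's) cat" where
  "discrete_cat S = \<lparr> Ob = S, Ar = S, Dom = id, Cod = id, Idm = id, Comp = (\<lambda>f g. f) \<rparr>"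

end

theory Submission
  imports Defs
begin

text \<open>Call a set S of objects a unique arrow set if every object has exactly one arrow into S.
  Its elements are maximal: for f, g : t \<rightarrow> c and the arrow k from c into S, both f;k and g;k
  are arrows from t into S, hence equal to the identity of t. Arrows between maximal objects are
  isomorphisms, so each maximal object is isomorphic to exactly one element of S, and S is a
  skeleton of Max(C). Conversely, if Max(C) is final, the comma categories c/Max(C) are groupoids
  in which connectedness forces all arrows from c into a skeleton to coincide. A functor from a
  discrete category has discrete comma categories, so it is final exactly when it is injective on
  objects with a unique arrow set as image.\<close>

lemma large_if_bij_betw:
  assumes "bij_betw g B A" and "large U A"
  shows "large U B"
proof -
  obtain e where e: "inj_on e A" "e ` A \<subseteq> U" using assms(2) unfolding large_def by blast
  have "inj_on (e \<circ> g) B" using assms(1) e(1) by (auto simp: bij_betw_def intro: comp_inj_on)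
  moreover have "(e \<circ> g) ` B \<subseteq> U" using assms(1) e(2) by (auto simp: bij_betw_def)
  ultimately show ?thesis unfolding large_def by blast
qed

lemma large_bij_betw:
  assumes "bij_betw b X Y"
  shows "large U X \<longleftrightarrow> large U Y"
  using large_if_bij_betw[OF assms] large_if_bij_betw[OF bij_betw_the_inv_into[OF assms]] by blast

lemma comma_ob_iff: "(d, f) \<in> comma_ob D C Fo c \<longleftrightarrow> d \<in> Ob D \<and> f \<in> hom C c (Fo d)"
  unfolding comma_ob_def by simp

lemma comma_rel_iff:
  "((d, f), (d', f')) \<in> comma_rel D C Fo Fa c \<longleftrightarrow>
     (d, f) \<in> comma_ob D C Fo c \<and> (d', f') \<in> comma_ob D C Fo c \<and>
     (\<exists>u\<in>hom D d d'. Comp C f (Fa u) = f')"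
  unfolding comma_rel_def by simp

locale Cat =
  fixes C :: "('o, 'a) cat"
  assumes category: "category C"
begin

lemma hom_Ob: "f \<in> hom C x y \<Longrightarrow> x \<in> Ob C \<and> y \<in> Ob C"
proof -
  have "\<forall>f\<in>Ar C. Dom C f \<in> Ob C \<and> Cod C f \<in> Ob C"
    using category unfolding category_def by (elim conjE)
  then show "f \<in> hom C x y \<Longrightarrow> x \<in> Ob C \<and> y \<in> Ob C" unfolding hom_def by blast
qed

lemma Idm_hom: "x \<in> Ob C \<Longrightarrow> Idm C x \<in> hom C x x"
  using category unfolding category_def by (elim conjE) blast

lemma Comp_hom: "f \<in> hom C x y \<Longrightarrow> g \<in> hom C y z \<Longrightarrow> Comp C f g \<in> hom C x z"
proof -
  have "\<forall>f\<in>Ar C. \<forall>g\<in>Ar C. Cod C f = Dom C g \<longrightarrow> Comp C f g \<in> hom C (Dom C f) (Cod C g)"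
    using category unfolding category_def by (elim conjE)
  then show "f \<in> hom C x y \<Longrightarrow> g \<in> hom C y z \<Longrightarrow> Comp C f g \<in> hom C x z"
    by (simp add: hom_def)
qed

lemma Comp_Idm_left_right:
  assumes "f \<in> hom C x y"
  shows "Comp C (Idm C x) f = f \<and> Comp C f (Idm C y) = f"
proof -
  have "\<forall>f\<in>Ar C. Comp C (Idm C (Dom C f)) f = f \<and> Comp C f (Idm C (Cod C f)) = f"
    using category unfolding category_def by (elim conjE)
  then show ?thesis using assms unfolding hom_def by blast
qed

lemma Comp_Idm_left: "f \<in> hom C x y \<Longrightarrow> Comp C (Idm C x) f = f"
  using Comp_Idm_left_right by blast

lemma Comp_Idm_right: "f \<in> hom C x y \<Longrightarrow> Comp C f (Idm C y) = f"
  using Comp_Idm_left_right by blast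

lemma Comp_assoc:
  assumes "f \<in> hom C w x" and "g \<in> hom C x y" and "h \<in> hom C y z"
  shows "Comp C (Comp C f g) h = Comp C f (Comp C g h)"
proof -
  have "\<forall>f\<in>Ar C. \<forall>g\<in>Ar C. \<forall>h\<in>Ar C. Cod C f = Dom C g \<and> Cod C g = Dom C h \<longrightarrow>
      Comp C (Comp C f g) h = Comp C f (Comp C g h)"
    using category unfolding category_def by (elim conjE)
  then show ?thesis using assms by (simp add: hom_def)
qed

lemma isomorphic_Ob: "isomorphic C x y \<Longrightarrow> x \<in> Ob C \<and> y \<in> Ob C"
  unfolding isomorphic_def using hom_Ob by blast

lemma isomorphic_refl: "x \<in> Ob C \<Longrightarrow> isomorphic C x x"
  unfolding isomorphic_def using Idm_hom Comp_Idm_left by blast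

lemma isomorphic_sym: "isomorphic C x y \<Longrightarrow> isomorphic C y x"
  unfolding isomorphic_def by blast

lemma isomorphic_trans:
  assumes "isomorphic C x y" and "isomorphic C y z"
  shows "isomorphic C x z"
proof -
  obtain f g where f: "f \<in> hom C x y" and g: "g \<in> hom C y x"
    and fg: "Comp C f g = Idm C x" and gf: "Comp C g f = Idm C y"
    using assms(1) unfolding isomorphic_def by blast
  obtain f' g' where f': "f' \<in> hom C y z" and g': "g' \<in> hom C z y"
    and fg': "Comp C f' g' = Idm C y" and gf': "Comp C g' f' = Idm C z"
    using assms(2) unfolding isomorphic_def by blast
  have "Comp C (Comp C f f') (Comp C g' g) = Comp C f (Comp C (Comp C f' g') g)"
    using Comp_assoc[OF f f' Comp_hom[OF g' g]] Comp_assoc[OF f' g' g] by simp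
  also have "\<dots> = Idm C x" using fg fg' g by (simp add: Comp_Idm_left)
  finally have left: "Comp C (Comp C f f') (Comp C g' g) = Idm C x" .
  have "Comp C (Comp C g' g) (Comp C f f') = Comp C g' (Comp C (Comp C g f) f')"
    using Comp_assoc[OF g' g Comp_hom[OF f f']] Comp_assoc[OF g f f'] by simp
  also have "\<dots> = Idm C z" using gf gf' f' by (simp add: Comp_Idm_left)
  finally have right: "Comp C (Comp C g' g) (Comp C f f') = Idm C z" .
  show ?thesis
    unfolding isomorphic_def using left right Comp_hom[OF f f'] Comp_hom[OF g' g] by blast
qed

lemma isomorphic_class_eq:
  "isomorphic C x y \<Longrightarrow> {z \<in> Ob C. isomorphic C x z} = {z \<in> Ob C. isomorphic C y z}"
  using isomorphic_sym isomorphic_trans by blast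

lemma exists_skeleton: "\<exists>R. skeleton_obs C R"
proof -
  define rep where "rep x = (SOME r. isomorphic C x r)" for x
  have rep: "isomorphic C x (rep x)" if "x \<in> Ob C" for x
    unfolding rep_def using isomorphic_refl[OF that] by (rule someI)
  have rep_eq: "rep x = rep y" if "isomorphic C x y" for x y
  proof -
    have "isomorphic C x = isomorphic C y"
      using that isomorphic_sym isomorphic_trans by blast
    then show ?thesis unfolding rep_def by simp
  qed
  have "skeleton_obs C (rep ` Ob C)"
    unfolding skeleton_obs_def
  proof (intro conjI ballI impI)
    show "rep ` Ob C \<subseteq> Ob C" using rep isomorphic_Ob by blast
    show "\<exists>r\<in>rep ` Ob C. isomorphic C x r" if "x \<in> Ob C" for x using rep that by blast
  next
    fix r r' assume "r \<in> rep ` Ob C" "r' \<in> rep ` Ob C" and iso: "isomorphic C r r'"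
    then obtain x x' where x: "x \<in> Ob C" "r = rep x" and x': "x' \<in> Ob C" "r' = rep x'" by blast
    have "isomorphic C (rep x) (rep x')" using iso x x' by simp
    then have "isomorphic C x x'"
      using isomorphic_trans[OF isomorphic_trans[OF rep[OF x(1)]] isomorphic_sym[OF rep[OF x'(1)]]]
      by blast
    then show "r = r'" using rep_eq x x' by simp
  qed
  then show ?thesis ..
qed

lemma skeleton_bij_iso_classes:
  assumes "skeleton_obs C R"
  shows "bij_betw (\<lambda>r. {y \<in> Ob C. isomorphic C r y}) R (iso_classes C)"
proof -
  define cls where "cls r = {y \<in> Ob C. isomorphic C r y}" for r
  have R: "R \<subseteq> Ob C" "\<And>x. x \<in> Ob C \<Longrightarrow> \<exists>r\<in>R. isomorphic C x r"
    "\<And>r r'. r \<in> R \<Longrightarrow> r' \<in> R \<Longrightarrow> isomorphic C r r' \<Longrightarrow> r = r'"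
    using assms unfolding skeleton_obs_def by blast+
  have "inj_on cls R"
  proof (rule inj_onI)
    fix r r' assume r: "r \<in> R" "r' \<in> R" and eq: "cls r = cls r'"
    have "r' \<in> cls r'" unfolding cls_def using isomorphic_refl R(1) r(2) by blast
    then have "r' \<in> cls r" using eq by simp
    then have "isomorphic C r r'" unfolding cls_def by simp
    then show "r = r'" using R(3) r by blast
  qed
  moreover have "cls ` R = iso_classes C"
  proof
    show "cls ` R \<subseteq> iso_classes C" using R(1) unfolding iso_classes_def cls_def by blast
    show "iso_classes C \<subseteq> cls ` R"
    proof
      fix X assume "X \<in> iso_classes C"
      then obtain x where x: "x \<in> Ob C" "X = cls x" unfolding iso_classes_def cls_def by blast
      then obtain r where r: "r \<in> R" "isomorphic C x r" using R(2) by blast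
      then have "X = cls r" using x(2) isomorphic_class_eq unfolding cls_def by simp
      then show "X \<in> cls ` R" using r(1) by blast
    qed
  qed
  ultimately show ?thesis unfolding bij_betw_def cls_def by blast
qed

lemma maximal_Ob: "maximal C m \<Longrightarrow> m \<in> Ob C"
  unfolding maximal_def by blast

lemma maximal_endo:
  assumes "maximal C m" and "f \<in> hom C m m"
  shows "f = Idm C m"
proof -
  have id: "Idm C m \<in> hom C m m" using Idm_hom maximal_Ob assms(1) by blast
  then obtain h where h: "h \<in> hom C m m" "Comp C f h = Idm C m" "Comp C (Idm C m) h = Idm C m"
    using assms unfolding maximal_def by blast
  then have "h = Idm C m" using Comp_Idm_left by simp
  then show ?thesis using h(2) Comp_Idm_right[OF assms(2)] by simp
qed

lemma maximal_arrow_inverse: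
  assumes "maximal C m" and "maximal C m'" and "f \<in> hom C m m'"
  shows "\<exists>h\<in>hom C m' m. Comp C f h = Idm C m \<and> Comp C h f = Idm C m'"
proof -
  obtain h where h: "h \<in> hom C m' m" "Comp C f h = Idm C m"
    using assms(1,3) unfolding maximal_def by blast
  have "Comp C h f = Idm C m'" by (rule maximal_endo[OF assms(2) Comp_hom[OF h(1) assms(3)]])
  with h show ?thesis by blast
qed

lemma maximal_isomorphic:
  "maximal C m \<Longrightarrow> maximal C m' \<Longrightarrow> f \<in> hom C m m' \<Longrightarrow> isomorphic C m m'"
  unfolding isomorphic_def using maximal_arrow_inverse by blast

lemma MaxCat_simps [simp]:
  "Ob (MaxCat C) = {m. maximal C m}"
  "Dom (MaxCat C) = Dom C" "Cod (MaxCat C) = Cod C"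
  "Idm (MaxCat C) = Idm C" "Comp (MaxCat C) = Comp C"
  unfolding MaxCat_def by simp_all

lemma hom_MaxCat: "hom (MaxCat C) x y = {u \<in> hom C x y. maximal C x \<and> maximal C y}"
  unfolding hom_def MaxCat_def by auto

lemma category_MaxCat: "category (MaxCat C)"
  using category maximal_Ob unfolding category_def hom_MaxCat
  by (auto simp: MaxCat_def hom_def)

lemma is_functor_MaxCat: "is_functor (MaxCat C) C id id"
  using category_MaxCat category maximal_Ob
  unfolding is_functor_def by (auto simp: MaxCat_def hom_def)

lemma isomorphic_MaxCat_iff:
  "isomorphic (MaxCat C) x y \<longleftrightarrow> maximal C x \<and> maximal C y \<and> isomorphic C x y"
  unfolding isomorphic_def hom_MaxCat by auto

lemma comma_ob_MaxCat_iff: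
  "(d, h) \<in> comma_ob (MaxCat C) C id c \<longleftrightarrow> maximal C d \<and> h \<in> hom C c d"
  by (simp add: comma_ob_iff)

lemma sym_comma_rel_MaxCat: "sym (comma_rel (MaxCat C) C id id c)"
proof (rule symI)
  fix x y assume "(x, y) \<in> comma_rel (MaxCat C) C id id c"
  then obtain d h d' h' u where xy: "x = (d, h)" "y = (d', h')"
    and obs: "maximal C d" "h \<in> hom C c d" "maximal C d'" "h' \<in> hom C c d'"
    and u: "u \<in> hom C d d'" "Comp C h u = h'"
    unfolding comma_rel_def comma_ob_MaxCat_iff hom_MaxCat by auto
  obtain v where v: "v \<in> hom C d' d" "Comp C u v = Idm C d"
    using maximal_arrow_inverse[OF obs(1,3) u(1)] by blast
  have "Comp C h' v = Comp C h (Comp C u v)" using Comp_assoc[OF obs(2) u(1) v(1)] u(2) by simp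
  also have "\<dots> = h" using v(2) obs(2) by (simp add: Comp_Idm_right)
  finally have "Comp C h' v = h" .
  moreover have "v \<in> hom (MaxCat C) d' d" using v(1) obs by (simp add: hom_MaxCat)
  ultimately show "(y, x) \<in> comma_rel (MaxCat C) C id id c"
    using obs unfolding xy comma_rel_iff comma_ob_MaxCat_iff id_apply by blast
qed

end

lemma trans_comma_rel:
  assumes "is_functor D C Fo Fa"
  shows "trans (comma_rel D C Fo Fa c)"
proof (rule transI)
  interpret C: Cat C using assms unfolding is_functor_def by (simp add: Cat.intro)
  interpret D: Cat D using assms unfolding is_functor_def by (simp add: Cat.intro)
  fix x y z
  assume "(x, y) \<in> comma_rel D C Fo Fa c" and "(y, z) \<in> comma_rel D C Fo Fa c"
  then obtain d f d' f' d'' f'' u v where xyz: "x = (d, f)" "y = (d', f')" "z = (d'', f'')"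
    and f: "f \<in> hom C c (Fo d)" and obs: "(d, f) \<in> comma_ob D C Fo c" "(d'', f'') \<in> comma_ob D C Fo c"
    and u: "u \<in> hom D d d'" "Comp C f (Fa u) = f'"
    and v: "v \<in> hom D d' d''" "Comp C f' (Fa v) = f''"
    unfolding comma_rel_def comma_ob_def by auto
  have Fa: "Fa w \<in> hom C (Fo x) (Fo y)" if "w \<in> hom D x y" for w x y
    using assms that unfolding is_functor_def hom_def by auto
  have "Fa (Comp D u v) = Comp C (Fa u) (Fa v)"
    using assms u(1) v(1) unfolding is_functor_def hom_def by auto
  then have "Comp C f (Fa (Comp D u v)) = f''"
    using C.Comp_assoc[OF f Fa[OF u(1)] Fa[OF v(1)]] u(2) v(2) by simp
  then show "(x, z) \<in> comma_rel D C Fo Fa c"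
    using xyz obs D.Comp_hom[OF u(1) v(1)] by (auto simp: comma_rel_iff)
qed

lemma category_discrete_cat: "category (discrete_cat S)"
  unfolding category_def discrete_cat_def hom_def by auto

lemma comma_ob_discrete_cat_iff:
  "(d, f) \<in> comma_ob (discrete_cat S) C Fo c \<longleftrightarrow> d \<in> S \<and> f \<in> hom C c (Fo d)"
  by (simp add: comma_ob_iff discrete_cat_def)

lemma hom_discrete_cat: "hom (discrete_cat S) x y = (if x = y \<and> x \<in> S then {x} else {})"
  unfolding hom_def discrete_cat_def by auto

definition unique_arrow_set :: "('o, 'a) cat \<Rightarrow> 'o set \<Rightarrow> bool" where
  "unique_arrow_set C S \<longleftrightarrow>
     S \<subseteq> Ob C \<and> (\<forall>c\<in>Ob C. \<exists>!f. f \<in> Ar C \<and> Dom C f = c \<and> Cod C f \<in> S)"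

context Cat
begin

lemma unique_arrow_set_ex:
  "unique_arrow_set C S \<Longrightarrow> c \<in> Ob C \<Longrightarrow> \<exists>s\<in>S. \<exists>k. k \<in> hom C c s"
  unfolding unique_arrow_set_def hom_def by blast

lemma unique_arrow_set_unique:
  "unique_arrow_set C S \<Longrightarrow> f \<in> hom C c s \<Longrightarrow> g \<in> hom C c s' \<Longrightarrow>
     s \<in> S \<Longrightarrow> s' \<in> S \<Longrightarrow> f = g"
  unfolding unique_arrow_set_def using hom_Ob unfolding hom_def by blast

lemma unique_arrow_set_maximal:
  assumes S: "unique_arrow_set C S" and "t \<in> S"
  shows "maximal C t"
  unfolding maximal_def
proof (intro conjI allI impI)
  show t: "t \<in> Ob C" using S \<open>t \<in> S\<close> unfolding unique_arrow_set_def by blast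
  fix c f g assume fg: "f \<in> hom C t c \<and> g \<in> hom C t c"
  then obtain s k where k: "s \<in> S" "k \<in> hom C c s"
    using unique_arrow_set_ex[OF S] hom_Ob by blast
  have "Comp C f k = Idm C t" "Comp C g k = Idm C t"
    using unique_arrow_set_unique[OF S _ Idm_hom[OF t]] Comp_hom fg k \<open>t \<in> S\<close> by blast+
  moreover have "s = t"
    using calculation(1) Comp_hom[of f t c k s] fg k Idm_hom[OF t] unfolding hom_def by auto
  ultimately show "\<exists>h\<in>hom C c t. Comp C f h = Idm C t \<and> Comp C g h = Idm C t"
    using k by blast
qed

lemma unique_arrow_set_skeleton:
  assumes S: "unique_arrow_set C S"
  shows "skeleton_obs (MaxCat C) S"
  unfolding skeleton_obs_def isomorphic_MaxCat_iff
proof (intro conjI ballI impI)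
  show "S \<subseteq> Ob (MaxCat C)" using unique_arrow_set_maximal[OF S] by auto
next
  fix m assume "m \<in> Ob (MaxCat C)"
  then have m: "maximal C m" by simp
  then obtain s k where "s \<in> S" "k \<in> hom C m s"
    using unique_arrow_set_ex[OF S] maximal_Ob by blast
  then show "\<exists>s\<in>S. maximal C m \<and> maximal C s \<and> isomorphic C m s"
    using m unique_arrow_set_maximal[OF S] maximal_isomorphic by blast
next
  fix s s' assume "s \<in> S" "s' \<in> S" "maximal C s \<and> maximal C s' \<and> isomorphic C s s'"
  then obtain f where f: "f \<in> hom C s s'" unfolding isomorphic_def by blast
  then have "f = Idm C s"
    using unique_arrow_set_unique[OF S f Idm_hom] hom_Ob \<open>s \<in> S\<close> \<open>s' \<in> S\<close> by blast
  then show "s = s'" using f Idm_hom[of s] hom_Ob[OF f] unfolding hom_def by auto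
qed

lemma final_MaxCat_if_unique_arrow_set:
  assumes S: "unique_arrow_set C S"
  shows "final (MaxCat C) C id id"
  unfolding final_def
proof (intro conjI ballI is_functor_MaxCat)
  fix c assume c: "c \<in> Ob C"
  let ?rel = "comma_rel (MaxCat C) C id id c"
  obtain s k where k: "s \<in> S" "k \<in> hom C c s" using unique_arrow_set_ex[OF S c] by blast
  have sk: "(s, k) \<in> comma_ob (MaxCat C) C id c"
    using k unique_arrow_set_maximal[OF S] by (simp add: comma_ob_MaxCat_iff)
  have to_sk: "(x, (s, k)) \<in> ?rel" if x: "x \<in> comma_ob (MaxCat C) C id c" for x
  proof -
    obtain m h where xe: "x = (m, h)" and m: "maximal C m" and h: "h \<in> hom C c m"
      using x by (cases x) (auto simp: comma_ob_MaxCat_iff)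
    obtain s' q where q: "s' \<in> S" "q \<in> hom C m s'"
      using unique_arrow_set_ex[OF S] maximal_Ob[OF m] by blast
    have hq: "Comp C h q = k" using unique_arrow_set_unique[OF S Comp_hom[OF h q(2)] k(2) q(1) k(1)] .
    then have "s' = s" using Comp_hom[OF h q(2)] k(2) unfolding hom_def by auto
    then have "q \<in> hom (MaxCat C) m s"
      using q m unique_arrow_set_maximal[OF S] by (simp add: hom_MaxCat)
    then show ?thesis using x sk hq xe by (auto simp: comma_rel_iff)
  qed
  show "comma_ob (MaxCat C) C id c \<noteq> {}" using sk by blast
  fix x y assume "x \<in> comma_ob (MaxCat C) C id c" "y \<in> comma_ob (MaxCat C) C id c"
  then have "(x, (s, k)) \<in> ?rel \<union> ?rel\<inverse>" "((s, k), y) \<in> ?rel \<union> ?rel\<inverse>" using to_sk by blast+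
  then show "(x, y) \<in> (?rel \<union> ?rel\<inverse>)\<^sup>*" by (meson r_into_rtrancl rtrancl_trans)
qed

lemma final_MaxCat_linked:
  assumes "final (MaxCat C) C id id" and "c \<in> Ob C"
    and "x \<in> comma_ob (MaxCat C) C id c" and "y \<in> comma_ob (MaxCat C) C id c"
  shows "x = y \<or> (x, y) \<in> comma_rel (MaxCat C) C id id c"
proof -
  let ?rel = "comma_rel (MaxCat C) C id id c"
  have "(x, y) \<in> (?rel \<union> ?rel\<inverse>)\<^sup>*" using assms unfolding final_def by blast
  also have "?rel \<union> ?rel\<inverse> = ?rel" using sym_comma_rel_MaxCat sym_conv_converse_eq by blast
  also have "?rel\<^sup>* = ?rel\<^sup>="
    using trans_comma_rel[OF is_functor_MaxCat] by (simp add: rtrancl_trancl_reflcl)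
  finally show ?thesis by blast
qed

lemma unique_arrow_set_if_skeleton:
  assumes final: "final (MaxCat C) C id id" and R: "skeleton_obs (MaxCat C) R"
  shows "unique_arrow_set C R"
  unfolding unique_arrow_set_def
proof (intro conjI ballI)
  have R_max: "r \<in> R \<Longrightarrow> maximal C r" for r using R by (auto simp: skeleton_obs_def)
  then show "R \<subseteq> Ob C" using maximal_Ob by blast
  fix c assume c: "c \<in> Ob C"
  obtain m h where "(m, h) \<in> comma_ob (MaxCat C) C id c"
    using final c unfolding final_def by fast
  then have m: "maximal C m" and h: "h \<in> hom C c m" by (simp_all add: comma_ob_MaxCat_iff)
  obtain r where r: "r \<in> R" "isomorphic C m r"
    using R m unfolding skeleton_obs_def isomorphic_MaxCat_iff by auto
  then obtain p where p: "p \<in> hom C m r" unfolding isomorphic_def by blast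
  have k: "Comp C h p \<in> hom C c r" using Comp_hom[OF h p] .
  show "\<exists>!f. f \<in> Ar C \<and> Dom C f = c \<and> Cod C f \<in> R"
  proof (rule ex1I)
    show "Comp C h p \<in> Ar C \<and> Dom C (Comp C h p) = c \<and> Cod C (Comp C h p) \<in> R"
      using k r(1) unfolding hom_def by blast
    fix g assume g: "g \<in> Ar C \<and> Dom C g = c \<and> Cod C g \<in> R"
    define r' where "r' = Cod C g"
    have g': "g \<in> hom C c r'" "r' \<in> R" using g unfolding r'_def hom_def by auto
    have "g = Comp C h p \<or> ((r, Comp C h p), (r', g)) \<in> comma_rel (MaxCat C) C id id c"
      using final_MaxCat_linked[OF final c, of "(r, Comp C h p)" "(r', g)"] k g' R_max r(1)
      by (auto simp: comma_ob_MaxCat_iff)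
    moreover have "g = Comp C h p"
      if linked: "((r, Comp C h p), (r', g)) \<in> comma_rel (MaxCat C) C id id c"
    proof -
      obtain u where u: "u \<in> hom C r r'" "Comp C (Comp C h p) u = g"
        using linked by (auto simp: comma_rel_iff hom_MaxCat)
      have "r = r'"
        using R r(1) g'(2) R_max maximal_isomorphic[OF _ _ u(1)]
        unfolding skeleton_obs_def isomorphic_MaxCat_iff by blast
      then have "u = Idm C r" using maximal_endo R_max r(1) u(1) by blast
      then show ?thesis using u(2) k Comp_Idm_right by simp
    qed
    ultimately show "g = Comp C h p" by blast
  qed
qed

lemma C_discrete_iff_unique_arrow_set:
  "C_discrete U C \<longleftrightarrow> (\<exists>S. unique_arrow_set C S \<and> large U S)"
proof -
  interpret M: Cat "MaxCat C" using category_MaxCat by (rule Cat.intro)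
  have large_skeleton: "large U R \<longleftrightarrow> large U (iso_classes (MaxCat C))"
    if "skeleton_obs (MaxCat C) R" for R
    using large_bij_betw[OF M.skeleton_bij_iso_classes[OF that]] .
  show ?thesis
  proof
    assume "C_discrete U C"
    then have final: "final (MaxCat C) C id id" and large: "large U (iso_classes (MaxCat C))"
      unfolding C_discrete_def by blast+
    obtain R where R: "skeleton_obs (MaxCat C) R" using M.exists_skeleton by blast
    then have "unique_arrow_set C R" "large U R"
      using unique_arrow_set_if_skeleton[OF final] large_skeleton large by blast+
    then show "\<exists>S. unique_arrow_set C S \<and> large U S" by blast
  next
    assume "\<exists>S. unique_arrow_set C S \<and> large U S"
    then obtain S where S: "unique_arrow_set C S" "large U S" by blast
    have "large U (iso_classes (MaxCat C))"
      using large_skeleton[OF unique_arrow_set_skeleton[OF S(1)]] S(2) by blast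
    then show "C_discrete U C"
      unfolding C_discrete_def using final_MaxCat_if_unique_arrow_set[OF S(1)] by blast
  qed
qed

lemma is_functor_discrete_cat:
  assumes "\<forall>s\<in>S. Fo s \<in> Ob C"
  shows "is_functor (discrete_cat S) C Fo (\<lambda>s. Idm C (Fo s))"
  using assms category category_discrete_cat Idm_hom Comp_Idm_left[OF Idm_hom]
  unfolding is_functor_def by (simp add: discrete_cat_def)

lemma comma_rel_discrete_cat_subset_Id:
  assumes "is_functor (discrete_cat S) C Fo Fa"
  shows "comma_rel (discrete_cat S) C Fo Fa c \<subseteq> Id"
proof
  fix p assume "p \<in> comma_rel (discrete_cat S) C Fo Fa c"
  then obtain d f d' f' where p: "p = ((d, f), (d', f'))" and f: "f \<in> hom C c (Fo d)"
    and "d' = d" "d \<in> S" and f': "Comp C f (Fa d) = f'"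
    unfolding comma_rel_def comma_ob_def hom_discrete_cat by (auto split: if_splits)
  moreover have "Fa d = Idm C (Fo d)"
    using assms \<open>d \<in> S\<close> unfolding is_functor_def by (simp add: discrete_cat_def)
  ultimately show "p \<in> Id" using Comp_Idm_right[OF f] by simp
qed

lemma final_discrete_cat_iff:
  "final (discrete_cat S) C Fo Fa \<longleftrightarrow>
     is_functor (discrete_cat S) C Fo Fa \<and> (\<forall>c\<in>Ob C. \<exists>!x. x \<in> comma_ob (discrete_cat S) C Fo c)"
proof (cases "is_functor (discrete_cat S) C Fo Fa")
  case True
  let ?rel = "\<lambda>c. comma_rel (discrete_cat S) C Fo Fa c"
  have "(?rel c \<union> (?rel c)\<inverse>)\<^sup>* \<subseteq> Id" for c
  proof -
    have "?rel c \<union> (?rel c)\<inverse> \<subseteq> Id" using comma_rel_discrete_cat_subset_Id[OF True] by blast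
    then have "(?rel c \<union> (?rel c)\<inverse>)\<^sup>* \<subseteq> Id\<^sup>*" by (rule rtrancl_mono)
    then show ?thesis by simp
  qed
  then show ?thesis using True unfolding final_def by blast
qed (simp add: final_def)

lemma unique_arrow_set_image_if_ex1_comma_ob:
  assumes Fo: "\<forall>s\<in>S. Fo s \<in> Ob C"
    and unique: "\<forall>c\<in>Ob C. \<exists>!x. x \<in> comma_ob (discrete_cat S) C Fo c"
  shows "inj_on Fo S \<and> unique_arrow_set C (Fo ` S)"
proof
  show "inj_on Fo S"
  proof (rule inj_onI)
    fix s s' assume "s \<in> S" "s' \<in> S" "Fo s = Fo s'"
    then have "(s, Idm C (Fo s)) \<in> comma_ob (discrete_cat S) C Fo (Fo s)"
      "(s', Idm C (Fo s)) \<in> comma_ob (discrete_cat S) C Fo (Fo s)"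
      using Idm_hom Fo by (auto simp: comma_ob_discrete_cat_iff)
    then show "s = s'" using unique Fo \<open>s \<in> S\<close> by blast
  qed
  show "unique_arrow_set C (Fo ` S)"
    unfolding unique_arrow_set_def
  proof (intro conjI ballI)
    show "Fo ` S \<subseteq> Ob C" using Fo by blast
    fix c assume c: "c \<in> Ob C"
    obtain x where "x \<in> comma_ob (discrete_cat S) C Fo c" using unique c by blast
    then obtain d f where f: "d \<in> S" "f \<in> hom C c (Fo d)"
      by (cases x) (auto simp: comma_ob_discrete_cat_iff)
    show "\<exists>!f. f \<in> Ar C \<and> Dom C f = c \<and> Cod C f \<in> Fo ` S"
    proof (rule ex1I)
      show "f \<in> Ar C \<and> Dom C f = c \<and> Cod C f \<in> Fo ` S" using f unfolding hom_def by blast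
      fix g assume "g \<in> Ar C \<and> Dom C g = c \<and> Cod C g \<in> Fo ` S"
      then obtain d' where g: "d' \<in> S" "g \<in> hom C c (Fo d')" unfolding hom_def by blast
      then have "(d', g) \<in> comma_ob (discrete_cat S) C Fo c" "(d, f) \<in> comma_ob (discrete_cat S) C Fo c"
        using f by (simp_all add: comma_ob_discrete_cat_iff)
      then have "(d', g) = (d, f)" using unique c by blast
      then show "g = f" by simp
    qed
  qed
qed

lemma ex1_comma_ob_if_unique_arrow_set_image:
  assumes inj: "inj_on Fo S" and S: "unique_arrow_set C (Fo ` S)" and c: "c \<in> Ob C"
  shows "\<exists>!x. x \<in> comma_ob (discrete_cat S) C Fo c"
proof -
  obtain d k where "d \<in> S" "k \<in> hom C c (Fo d)" using unique_arrow_set_ex[OF S c] by blast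
  then have ex: "(d, k) \<in> comma_ob (discrete_cat S) C Fo c" by (simp add: comma_ob_discrete_cat_iff)
  have "x = y" if xy: "x \<in> comma_ob (discrete_cat S) C Fo c" "y \<in> comma_ob (discrete_cat S) C Fo c"
    for x y
  proof -
    obtain d f d' f' where xy: "x = (d, f)" "y = (d', f')"
      and f: "d \<in> S" "f \<in> hom C c (Fo d)" and f': "d' \<in> S" "f' \<in> hom C c (Fo d')"
      using xy by (cases x, cases y) (auto simp: comma_ob_discrete_cat_iff)
    have "f = f'" using unique_arrow_set_unique[OF S f(2) f'(2)] f f' by blast
    then have "d = d'" using f f' inj unfolding hom_def by (auto dest: inj_onD)
    then show "x = y" using xy \<open>f = f'\<close> by simp
  qed
  then show ?thesis using ex by blast
qed

lemma final_discrete_cat_iff_unique_arrow_set: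
  "final (discrete_cat S) C Fo Fa \<longleftrightarrow>
     is_functor (discrete_cat S) C Fo Fa \<and> inj_on Fo S \<and> unique_arrow_set C (Fo ` S)"
proof (cases "is_functor (discrete_cat S) C Fo Fa")
  case True
  then have Fo: "\<forall>s\<in>S. Fo s \<in> Ob C" unfolding is_functor_def by (simp add: discrete_cat_def)
  have "(\<forall>c\<in>Ob C. \<exists>!x. x \<in> comma_ob (discrete_cat S) C Fo c) \<longleftrightarrow>
      inj_on Fo S \<and> unique_arrow_set C (Fo ` S)"
  proof
    assume "\<forall>c\<in>Ob C. \<exists>!x. x \<in> comma_ob (discrete_cat S) C Fo c"
    then show "inj_on Fo S \<and> unique_arrow_set C (Fo ` S)"
      by (rule unique_arrow_set_image_if_ex1_comma_ob[OF Fo])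
  next
    assume "inj_on Fo S \<and> unique_arrow_set C (Fo ` S)"
    then show "\<forall>c\<in>Ob C. \<exists>!x. x \<in> comma_ob (discrete_cat S) C Fo c"
      using ex1_comma_ob_if_unique_arrow_set_image by blast
  qed
  then show ?thesis using True by (simp only: final_discrete_cat_iff simp_thms)
qed (simp add: final_def)

lemma ex_final_discrete_cat_iff_unique_arrow_set:
  fixes U :: "'u set"
  shows "(\<exists>(S :: 'u set) Fo Fa. large U S \<and> final (discrete_cat S) C Fo Fa) \<longleftrightarrow>
    (\<exists>T. unique_arrow_set C T \<and> large U T)"
proof
  assume "\<exists>(S :: 'u set) Fo Fa. large U S \<and> final (discrete_cat S) C Fo Fa"
  then obtain S :: "'u set" and Fo Fa where "large U S" "final (discrete_cat S) C Fo Fa" by blast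
  then show "\<exists>T. unique_arrow_set C T \<and> large U T"
    using final_discrete_cat_iff_unique_arrow_set large_bij_betw inj_on_imp_bij_betw by metis
next
  assume "\<exists>T. unique_arrow_set C T \<and> large U T"
  then obtain T e where T: "unique_arrow_set C T" and e: "inj_on e T" "e ` T \<subseteq> U"
    unfolding large_def by blast
  define Fo where "Fo = inv_into T e"
  have bij: "bij_betw Fo (e ` T) T"
    unfolding Fo_def by (rule bij_betw_inv_into) (simp add: e(1) inj_on_imp_bij_betw)
  then have inj: "inj_on Fo (e ` T)" and image: "Fo ` e ` T = T"
    by (simp_all add: bij_betw_imp_inj_on bij_betw_imp_surj_on)
  moreover have "\<forall>s\<in>e ` T. Fo s \<in> Ob C" using image T unfolding unique_arrow_set_def by blast
  then have "is_functor (discrete_cat (e ` T)) C Fo (\<lambda>s. Idm C (Fo s))"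
    by (rule is_functor_discrete_cat)
  moreover have "unique_arrow_set C (Fo ` e ` T)" unfolding image by (rule T)
  ultimately have "final (discrete_cat (e ` T)) C Fo (\<lambda>s. Idm C (Fo s))"
    using final_discrete_cat_iff_unique_arrow_set by blast
  moreover have "large U (e ` T)" unfolding large_def using e(2) by (intro exI[of _ id]) auto
  ultimately show "\<exists>(S :: 'u set) Fo Fa. large U S \<and> final (discrete_cat S) C Fo Fa" by blast
qed

end

theorem mainTheorem18:
  fixes C :: "('o, 'a) cat" and U :: "'u set"
  assumes "category C"
  shows "(C_discrete U C \<longleftrightarrow>
            (\<exists>(S :: 'u set) Fo Fa. large U S \<and> final (discrete_cat S) C Fo Fa))
       \<and> (C_discrete U C \<longleftrightarrow>
            (\<exists>S. S \<subseteq> Ob C \<and> large U S \<and>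
                 (\<forall>c\<in>Ob C. \<exists>!f. f \<in> Ar C \<and> Dom C f = c \<and> Cod C f \<in> S)))
       \<and> (C_discrete U C \<longrightarrow>
            (\<forall>(S :: 'u set) Fo Fa. large U S \<and> final (discrete_cat S) C Fo Fa \<longrightarrow>
                (\<exists>R. skeleton_obs (MaxCat C) R \<and> (\<exists>b. bij_betw b S R)))
          \<and> (\<forall>S. S \<subseteq> Ob C \<and> large U S \<and>
                 (\<forall>c\<in>Ob C. \<exists>!f. f \<in> Ar C \<and> Dom C f = c \<and> Cod C f \<in> S) \<longrightarrow>
                (\<exists>R. skeleton_obs (MaxCat C) R \<and> (\<exists>b. bij_betw b S R))))"
proof -
  interpret Cat C using assms by (rule Cat.intro)
  have skeleton_if_final: "\<exists>R. skeleton_obs (MaxCat C) R \<and> (\<exists>b. bij_betw b S R)"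
    if "final (discrete_cat S) C Fo Fa" for S :: "'u set" and Fo Fa
  proof -
    have "inj_on Fo S" "unique_arrow_set C (Fo ` S)"
      using that final_discrete_cat_iff_unique_arrow_set by blast+
    then show ?thesis using unique_arrow_set_skeleton inj_on_imp_bij_betw by blast
  qed
  show ?thesis
  proof (intro conjI allI impI)
    show "C_discrete U C \<longleftrightarrow> (\<exists>(S :: 'u set) Fo Fa. large U S \<and> final (discrete_cat S) C Fo Fa)"
      by (simp only: C_discrete_iff_unique_arrow_set ex_final_discrete_cat_iff_unique_arrow_set)
    show "C_discrete U C \<longleftrightarrow> (\<exists>S. S \<subseteq> Ob C \<and> large U S \<and>
        (\<forall>c\<in>Ob C. \<exists>!f. f \<in> Ar C \<and> Dom C f = c \<and> Cod C f \<in> S))"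
      unfolding C_discrete_iff_unique_arrow_set unique_arrow_set_def by blast
  next
    fix S :: "'u set" and Fo Fa
    assume "large U S \<and> final (discrete_cat S) C Fo Fa"
    then show "\<exists>R. skeleton_obs (MaxCat C) R \<and> (\<exists>b. bij_betw b S R)"
      using skeleton_if_final by blast
  next
    fix S
    assume "S \<subseteq> Ob C \<and> large U S \<and> (\<forall>c\<in>Ob C. \<exists>!f. f \<in> Ar C \<and> Dom C f = c \<and> Cod C f \<in> S)"
    then have "skeleton_obs (MaxCat C) S"
      by (intro unique_arrow_set_skeleton) (simp add: unique_arrow_set_def)
    then show "\<exists>R. skeleton_obs (MaxCat C) R \<and> (\<exists>b. bij_betw b S R)" using bij_betw_id by blast
  qed
qed

end
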